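(* Let $I$ be a $\ast$-homog ideal of $D$ and put $M(I)=\{x\in D:\ (x,I)^{\ast}\neq D\}$, where $(x,I)$ denotes the ideal $xD+I$. Then $M(I)$ is a maximal $\ast$-ideal of $D$, and it is the unique maximal $\ast$-ideal of $D$ containing $I$.
   Context: $D$ is an integral domain with quotient field $K$, and $\ast$ is a star operation on $D$ of finite character (i.e. for every nonzero fractional ideal $I$, $I^{\ast}=\bigcup\{J^{\ast}: J\subseteq I,\ J \text{ a nonzero finitely generated fractional ideal}\}$). A $\ast$-ideal is a nonzero fractional ideal $I$ with $I^\ast=I$; it is of finite type if $I=J^\ast$ for some nonzero finitely generated $J$. A maximal $\ast$-ideal is an integral $\ast$-ideal maximal among proper integral $\ast$-ideals. A $\ast$-homog ideal of $D$ is an integral $\ast$-ideal $I$ of finite type with $I\subsetneq D$ such that $(J+L)^{\ast}\neq D$ for every pair $J,L$ of proper integral $\ast$-ideals of finite type with $I\subseteq J$ and $I\subseteq L$. *)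

theory Defs
  imports Main
begin

text \<open>The integral domain D is modelled as a subring D of a field K (type 'k)
  such that K is the quotient field of D.\<close>

definition subring_with_qf :: "'k::field set \<Rightarrow> bool" where
  "subring_with_qf D \<longleftrightarrow> 0 \<in> D \<and> 1 \<in> D \<and>
     (\<forall>a\<in>D. \<forall>b\<in>D. a + b \<in> D \<and> a - b \<in> D \<and> a * b \<in> D) \<and>
     (\<forall>x. \<exists>a\<in>D. \<exists>b\<in>D. b \<noteq> 0 \<and> x = a / b)"

definition dsubmod :: "'k::field set \<Rightarrow> 'k set \<Rightarrow> bool" where
  "dsubmod D I \<longleftrightarrow> 0 \<in> I \<and> (\<forall>x\<in>I. \<forall>y\<in>I. x + y \<in> I) \<and>
     (\<forall>d\<in>D. \<forall>x\<in>I. d * x \<in> I)"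

definition nz_frac_ideal :: "'k::field set \<Rightarrow> 'k set \<Rightarrow> bool" where
  "nz_frac_ideal D I \<longleftrightarrow> dsubmod D I \<and> I \<noteq> {0} \<and>
     (\<exists>d\<in>D. d \<noteq> 0 \<and> (\<forall>x\<in>I. d * x \<in> D))"

definition smul_set :: "'k::field \<Rightarrow> 'k set \<Rightarrow> 'k set" where
  "smul_set x I = (\<lambda>y. x * y) ` I"

definition sum_set :: "'k::field set \<Rightarrow> 'k set \<Rightarrow> 'k set" where
  "sum_set A B = {a + b | a b. a \<in> A \<and> b \<in> B}"

definition gen :: "'k::field set \<Rightarrow> 'k set \<Rightarrow> 'k set" where
  "gen D S = \<Inter>{J. dsubmod D J \<and> S \<subseteq> J}"

definition fin_gen :: "'k::field set \<Rightarrow> 'k set \<Rightarrow> bool" where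
  "fin_gen D J \<longleftrightarrow> (\<exists>S. finite S \<and> J = gen D S)"

definition star_op :: "'k::field set \<Rightarrow> ('k set \<Rightarrow> 'k set) \<Rightarrow> bool" where
  "star_op D st \<longleftrightarrow>
     (\<forall>I. nz_frac_ideal D I \<longrightarrow> nz_frac_ideal D (st I)) \<and>
     (\<forall>x. x \<noteq> 0 \<longrightarrow> st (smul_set x D) = smul_set x D) \<and>
     (\<forall>x I. x \<noteq> 0 \<longrightarrow> nz_frac_ideal D I \<longrightarrow> st (smul_set x I) = smul_set x (st I)) \<and>
     (\<forall>I. nz_frac_ideal D I \<longrightarrow> I \<subseteq> st I) \<and>
     (\<forall>I J. nz_frac_ideal D I \<longrightarrow> nz_frac_ideal D J \<longrightarrow> I \<subseteq> J \<longrightarrow> st I \<subseteq> st J) \<and>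
     (\<forall>I. nz_frac_ideal D I \<longrightarrow> st (st I) = st I)"

definition finite_character :: "'k::field set \<Rightarrow> ('k set \<Rightarrow> 'k set) \<Rightarrow> bool" where
  "finite_character D st \<longleftrightarrow>
     (\<forall>I. nz_frac_ideal D I \<longrightarrow>
        st I = \<Union>{st J | J. nz_frac_ideal D J \<and> fin_gen D J \<and> J \<subseteq> I})"

definition star_ideal :: "'k::field set \<Rightarrow> ('k set \<Rightarrow> 'k set) \<Rightarrow> 'k set \<Rightarrow> bool" where
  "star_ideal D st I \<longleftrightarrow> nz_frac_ideal D I \<and> st I = I"

definition finite_type :: "'k::field set \<Rightarrow> ('k set \<Rightarrow> 'k set) \<Rightarrow> 'k set \<Rightarrow> bool" where
  "finite_type D st I \<longleftrightarrow> (\<exists>J. nz_frac_ideal D J \<and> fin_gen D J \<and> I = st J)"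

definition proper_int_star :: "'k::field set \<Rightarrow> ('k set \<Rightarrow> 'k set) \<Rightarrow> 'k set \<Rightarrow> bool" where
  "proper_int_star D st I \<longleftrightarrow> star_ideal D st I \<and> I \<subseteq> D \<and> I \<noteq> D"

definition max_star_ideal :: "'k::field set \<Rightarrow> ('k set \<Rightarrow> 'k set) \<Rightarrow> 'k set \<Rightarrow> bool" where
  "max_star_ideal D st M \<longleftrightarrow> proper_int_star D st M \<and>
     (\<forall>N. proper_int_star D st N \<longrightarrow> M \<subseteq> N \<longrightarrow> N = M)"

definition star_homog :: "'k::field set \<Rightarrow> ('k set \<Rightarrow> 'k set) \<Rightarrow> 'k set \<Rightarrow> bool" where
  "star_homog D st I \<longleftrightarrow> proper_int_star D st I \<and> finite_type D st I \<and>
     (\<forall>J L. proper_int_star D st J \<longrightarrow> finite_type D st J \<longrightarrow>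
            proper_int_star D st L \<longrightarrow> finite_type D st L \<longrightarrow>
            I \<subseteq> J \<longrightarrow> I \<subseteq> L \<longrightarrow> st (sum_set J L) \<noteq> D)"

definition M_of :: "'k::field set \<Rightarrow> ('k set \<Rightarrow> 'k set) \<Rightarrow> 'k set \<Rightarrow> 'k set" where
  "M_of D st I = {x \<in> D. st (sum_set (smul_set x D) I) \<noteq> D}"

end

theory Submission
  imports Defs
begin

text \<open>The proper integral \<open>\<ast>\<close>-ideals of finite type containing a \<open>\<ast>\<close>-homog ideal \<open>I\<close> form a
  directed family: the \<open>\<ast>\<close>-sum of two of them is again proper by homogeneity, and of finite type.
  Every \<open>x \<in> M(I)\<close> lies in the member \<open>(x, I)\<^sup>\<ast>\<close>, and every member lies in \<open>M(I)\<close>, so \<open>M(I)\<close> is the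
  union of this family. A directed union of \<open>\<ast>\<close>-ideals is a \<open>\<ast>\<close>-ideal when \<open>\<ast>\<close> has finite
  character, hence \<open>M(I)\<close> is a proper \<open>\<ast>\<close>-ideal; it contains every proper \<open>\<ast>\<close>-ideal containing
  \<open>I\<close>, which gives both maximality and uniqueness.\<close>

definition directed :: "'a set set \<Rightarrow> bool" where
  "directed \<A> \<longleftrightarrow> (\<forall>A\<in>\<A>. \<forall>B\<in>\<A>. \<exists>C\<in>\<A>. A \<union> B \<subseteq> C)"

lemma finite_subset_Union_directed:
  assumes "finite T" "T \<subseteq> \<Union>\<A>" "\<A> \<noteq> {}" "directed \<A>"
  shows "\<exists>A\<in>\<A>. T \<subseteq> A"
  using assms(1,2)
proof (induction T rule: finite_induct)
  case empty
  then show ?case using assms(3) by auto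
next
  case (insert t T)
  then obtain A B where "A \<in> \<A>" "T \<subseteq> A" "B \<in> \<A>" "t \<in> B" by auto
  then obtain C where "C \<in> \<A>" "A \<union> B \<subseteq> C" using assms(4) unfolding directed_def by blast
  then show ?case using \<open>T \<subseteq> A\<close> \<open>t \<in> B\<close> by blast
qed

lemma dsubmod_sum_set: "dsubmod D A \<Longrightarrow> dsubmod D B \<Longrightarrow> dsubmod D (sum_set A B)"
  unfolding dsubmod_def sum_set_def
proof (intro conjI ballI)
  assume A: "0 \<in> A \<and> (\<forall>x\<in>A. \<forall>y\<in>A. x + y \<in> A) \<and> (\<forall>d\<in>D. \<forall>x\<in>A. d * x \<in> A)"
    and B: "0 \<in> B \<and> (\<forall>x\<in>B. \<forall>y\<in>B. x + y \<in> B) \<and> (\<forall>d\<in>D. \<forall>x\<in>B. d * x \<in> B)"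
  show "0 \<in> {a + b |a b. a \<in> A \<and> b \<in> B}" using A B by force
  fix x y assume "x \<in> {a + b |a b. a \<in> A \<and> b \<in> B}" "y \<in> {a + b |a b. a \<in> A \<and> b \<in> B}"
  then obtain a b a' b' where "x = a + b" "y = a' + b'" "a \<in> A" "b \<in> B" "a' \<in> A" "b' \<in> B"
    by auto
  moreover have "x + y = (a + a') + (b + b')" using calculation by (simp add: algebra_simps)
  ultimately show "x + y \<in> {a + b |a b. a \<in> A \<and> b \<in> B}" using A B by blast
next
  fix d x assume A: "0 \<in> A \<and> (\<forall>x\<in>A. \<forall>y\<in>A. x + y \<in> A) \<and> (\<forall>d\<in>D. \<forall>x\<in>A. d * x \<in> A)"
    and B: "0 \<in> B \<and> (\<forall>x\<in>B. \<forall>y\<in>B. x + y \<in> B) \<and> (\<forall>d\<in>D. \<forall>x\<in>B. d * x \<in> B)"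
    and d: "d \<in> D" and "x \<in> {a + b |a b. a \<in> A \<and> b \<in> B}"
  then obtain a b where "x = a + b" "a \<in> A" "b \<in> B" by auto
  moreover have "d * x = d * a + d * b" using calculation by (simp add: algebra_simps)
  ultimately show "d * x \<in> {a + b |a b. a \<in> A \<and> b \<in> B}" using A B d by blast
qed

lemma sum_set_upper1: "dsubmod D B \<Longrightarrow> A \<subseteq> sum_set A B"
  unfolding sum_set_def dsubmod_def by force

lemma sum_set_upper2: "dsubmod D A \<Longrightarrow> B \<subseteq> sum_set A B"
  unfolding sum_set_def dsubmod_def by force

lemma sum_set_least: "dsubmod D C \<Longrightarrow> A \<subseteq> C \<Longrightarrow> B \<subseteq> C \<Longrightarrow> sum_set A B \<subseteq> C"
  unfolding sum_set_def dsubmod_def by blast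

lemma sum_set_mono: "A \<subseteq> A' \<Longrightarrow> B \<subseteq> B' \<Longrightarrow> sum_set A B \<subseteq> sum_set A' B'"
  unfolding sum_set_def by blast

lemma sum_set_commute: "sum_set A B = sum_set B A"
  unfolding sum_set_def by (auto; metis add.commute)

lemma gen_dsubmod: "dsubmod D (gen D T)"
  unfolding gen_def dsubmod_def by auto

lemma gen_superset: "T \<subseteq> gen D T"
  unfolding gen_def by auto

lemma gen_least: "dsubmod D A \<Longrightarrow> T \<subseteq> A \<Longrightarrow> gen D T \<subseteq> A"
  unfolding gen_def by auto

lemma gen_Un: "gen D (T \<union> U) = sum_set (gen D T) (gen D U)"
proof
  have "gen D T \<subseteq> sum_set (gen D T) (gen D U)" "gen D U \<subseteq> sum_set (gen D T) (gen D U)"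
    by (rule sum_set_upper1[OF gen_dsubmod], rule sum_set_upper2[OF gen_dsubmod])
  then have "T \<subseteq> sum_set (gen D T) (gen D U)" "U \<subseteq> sum_set (gen D T) (gen D U)"
    using gen_superset[where D=D and T=T] gen_superset[where D=D and T=U] by blast+
  then show "gen D (T \<union> U) \<subseteq> sum_set (gen D T) (gen D U)"
    using gen_least[OF dsubmod_sum_set[OF gen_dsubmod gen_dsubmod]] by blast
  have "gen D T \<subseteq> gen D (T \<union> U)" "gen D U \<subseteq> gen D (T \<union> U)"
    using gen_least[OF gen_dsubmod[where T="T \<union> U"]] gen_superset[where D=D and T="T \<union> U"]
    by blast+
  then show "sum_set (gen D T) (gen D U) \<subseteq> gen D (T \<union> U)"
    using sum_set_least[OF gen_dsubmod] by blast
qed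

lemma dsubmod_Union_directed:
  assumes "\<forall>A\<in>\<A>. dsubmod D A" "\<A> \<noteq> {}" "directed \<A>"
  shows "dsubmod D (\<Union>\<A>)"
  unfolding dsubmod_def
proof (intro conjI ballI)
  show "0 \<in> \<Union>\<A>" using assms(1,2) unfolding dsubmod_def by blast
  fix x y assume "x \<in> \<Union>\<A>" "y \<in> \<Union>\<A>"
  then have "{x, y} \<subseteq> \<Union>\<A>" by blast
  then obtain A where A: "A \<in> \<A>" "{x, y} \<subseteq> A"
    using finite_subset_Union_directed[of "{x, y}"] assms(2,3) by blast
  have "x + y \<in> A" using assms(1) A unfolding dsubmod_def by simp
  then show "x + y \<in> \<Union>\<A>" using A(1) by blast
next
  fix d x assume d: "d \<in> D" and "x \<in> \<Union>\<A>"
  then obtain A where A: "A \<in> \<A>" "x \<in> A" by blast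
  have "d * x \<in> A" using assms(1) A d unfolding dsubmod_def by simp
  then show "d * x \<in> \<Union>\<A>" using A(1) by blast
qed

locale star_domain =
  fixes D :: "'k::field set" and st :: "'k set \<Rightarrow> 'k set"
  assumes subring: "subring_with_qf D" and star: "star_op D st"
begin

lemma zero_in_D: "0 \<in> D" using subring by (simp add: subring_with_qf_def)
lemma one_in_D: "1 \<in> D" using subring by (simp add: subring_with_qf_def)
lemma add_in_D: "a \<in> D \<Longrightarrow> b \<in> D \<Longrightarrow> a + b \<in> D" using subring by (simp add: subring_with_qf_def)
lemma mult_in_D: "a \<in> D \<Longrightarrow> b \<in> D \<Longrightarrow> a * b \<in> D" using subring by (simp add: subring_with_qf_def)

definition int_ideal :: "'k set \<Rightarrow> bool" where
  "int_ideal A \<longleftrightarrow> dsubmod D A \<and> A \<subseteq> D \<and> A \<noteq> {0}"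

lemma int_ideal_nz_frac_ideal: "int_ideal A \<Longrightarrow> nz_frac_ideal D A"
  unfolding int_ideal_def nz_frac_ideal_def using one_in_D by force

lemma nz_frac_ideal_dsubmod: "nz_frac_ideal D A \<Longrightarrow> dsubmod D A"
  by (simp add: nz_frac_ideal_def)

lemma dsubmod_D: "dsubmod D D"
  unfolding dsubmod_def using zero_in_D add_in_D mult_in_D by auto

lemma int_ideal_D: "int_ideal D"
  unfolding int_ideal_def using dsubmod_D one_in_D by auto

lemma proper_int_star_iff: "proper_int_star D st A \<longleftrightarrow> int_ideal A \<and> st A = A \<and> A \<noteq> D"
proof
  assume "proper_int_star D st A"
  then have "nz_frac_ideal D A" "st A = A" "A \<subseteq> D" "A \<noteq> D"
    unfolding proper_int_star_def star_ideal_def by auto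
  then show "int_ideal A \<and> st A = A \<and> A \<noteq> D"
    unfolding int_ideal_def nz_frac_ideal_def by blast
next
  assume "int_ideal A \<and> st A = A \<and> A \<noteq> D"
  then show "proper_int_star D st A"
    unfolding proper_int_star_def star_ideal_def using int_ideal_nz_frac_ideal int_ideal_def by blast
qed

lemma star_nz_frac_ideal: "nz_frac_ideal D A \<Longrightarrow> nz_frac_ideal D (st A)"
  using star by (simp add: star_op_def)
lemma star_extensive: "nz_frac_ideal D A \<Longrightarrow> A \<subseteq> st A"
  using star by (simp add: star_op_def)
lemma star_mono: "nz_frac_ideal D A \<Longrightarrow> nz_frac_ideal D B \<Longrightarrow> A \<subseteq> B \<Longrightarrow> st A \<subseteq> st B"
  using star by (simp add: star_op_def)
lemma star_idem: "nz_frac_ideal D A \<Longrightarrow> st (st A) = st A"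
  using star by (simp add: star_op_def)

lemma smul_one_D: "smul_set 1 D = D" by (simp add: smul_set_def)

lemma star_D: "st D = D"
  using star smul_one_D unfolding star_op_def by (metis one_neq_zero)

lemma star_int_ideal: "int_ideal A \<Longrightarrow> int_ideal (st A)"
proof -
  assume A: "int_ideal A"
  have "st A \<subseteq> D"
    using star_mono[of A D] int_ideal_nz_frac_ideal[OF A] int_ideal_nz_frac_ideal[OF int_ideal_D]
      star_D A unfolding int_ideal_def by auto
  moreover have "st A \<noteq> {0}"
    using star_extensive int_ideal_nz_frac_ideal[OF A] A unfolding int_ideal_def dsubmod_def by blast
  ultimately show ?thesis
    using nz_frac_ideal_dsubmod star_nz_frac_ideal int_ideal_nz_frac_ideal[OF A]
    unfolding int_ideal_def by blast
qed

lemma sum_set_subset_D: "A \<subseteq> D \<Longrightarrow> B \<subseteq> D \<Longrightarrow> sum_set A B \<subseteq> D"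
  unfolding sum_set_def using add_in_D by auto

lemma int_ideal_sum_set:
  assumes "dsubmod D A" "A \<subseteq> D" "int_ideal B"
  shows "int_ideal (sum_set A B)"
proof -
  have "B \<subseteq> sum_set A B" using sum_set_upper2 assms(1) .
  moreover have "B \<noteq> {0}" "0 \<in> B" using assms(3) unfolding int_ideal_def dsubmod_def by auto
  ultimately have "sum_set A B \<noteq> {0}" by blast
  then show ?thesis
    using assms dsubmod_sum_set sum_set_subset_D unfolding int_ideal_def by auto
qed

lemma gen_subset_D: "T \<subseteq> D \<Longrightarrow> gen D T \<subseteq> D"
  using gen_least dsubmod_D .

lemma gen_singleton: "x \<in> D \<Longrightarrow> gen D {x} = smul_set x D"
proof
  assume x: "x \<in> D"
  have "dsubmod D (smul_set x D)"
    unfolding dsubmod_def smul_set_def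
  proof (intro conjI ballI)
    show "0 \<in> (*) x ` D" using zero_in_D by force
    fix a b assume "a \<in> (*) x ` D" "b \<in> (*) x ` D"
    then obtain u v where "a = x * u" "b = x * v" "u \<in> D" "v \<in> D" by auto
    then show "a + b \<in> (*) x ` D" by (metis add_in_D distrib_left image_eqI)
  next
    fix d a assume "d \<in> D" "a \<in> (*) x ` D"
    then obtain u where "a = x * u" "u \<in> D" by auto
    then show "d * a \<in> (*) x ` D" using mult_in_D \<open>d \<in> D\<close> by (metis image_eqI mult.left_commute)
  qed
  moreover have "x \<in> smul_set x D" unfolding smul_set_def using one_in_D by force
  ultimately show "gen D {x} \<subseteq> smul_set x D" using gen_least by blast
  show "smul_set x D \<subseteq> gen D {x}"
    using gen_superset[where T="{x}"] gen_dsubmod[where T="{x}"]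
    unfolding smul_set_def dsubmod_def by (auto simp: mult.commute)
qed

lemma star_sum_set_star:
  assumes "dsubmod D A" "A \<subseteq> D" "int_ideal B"
  shows "st (sum_set A (st B)) = st (sum_set A B)"
proof -
  have B: "nz_frac_ideal D B" using int_ideal_nz_frac_ideal assms(3) .
  have AB: "nz_frac_ideal D (sum_set A B)"
    using int_ideal_sum_set assms int_ideal_nz_frac_ideal by blast
  have AstB: "nz_frac_ideal D (sum_set A (st B))"
    using int_ideal_sum_set assms star_int_ideal int_ideal_nz_frac_ideal by blast
  have "sum_set A B \<subseteq> sum_set A (st B)" using sum_set_mono star_extensive B by blast
  then have le: "st (sum_set A B) \<subseteq> st (sum_set A (st B))" using star_mono AB AstB by blast
  have "sum_set A (st B) \<subseteq> st (sum_set A B)"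
  proof (rule sum_set_least)
    show "dsubmod D (st (sum_set A B))" using nz_frac_ideal_dsubmod star_nz_frac_ideal AB by blast
    show "A \<subseteq> st (sum_set A B)"
      using sum_set_upper1 star_extensive AB assms(3) unfolding int_ideal_def by blast
    have "B \<subseteq> sum_set A B" using sum_set_upper2 assms(1) .
    then show "st B \<subseteq> st (sum_set A B)" using star_mono AB B by blast
  qed
  then have "st (sum_set A (st B)) \<subseteq> st (st (sum_set A B))"
    using star_mono AstB star_nz_frac_ideal AB by blast
  then show ?thesis using le star_idem AB by auto
qed

lemma finite_type_int_ideal_obtain:
  assumes "finite_type D st A" "A \<subseteq> D"
  obtains T where "finite T" "int_ideal (gen D T)" "A = st (gen D T)"
proof -
  obtain T where J: "nz_frac_ideal D (gen D T)" "finite T" "A = st (gen D T)"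
    using assms(1) unfolding finite_type_def fin_gen_def by blast
  have "gen D T \<subseteq> D" using star_extensive J assms(2) by blast
  then have "int_ideal (gen D T)"
    using J nz_frac_ideal_dsubmod unfolding int_ideal_def nz_frac_ideal_def by blast
  then show thesis using that J by blast
qed

lemma finite_type_star_gen_sum:
  assumes "finite S" "S \<subseteq> D" "finite_type D st B" "int_ideal B"
  shows "finite_type D st (st (sum_set (gen D S) B))"
proof -
  obtain T where T: "finite T" "int_ideal (gen D T)" "B = st (gen D T)"
    using finite_type_int_ideal_obtain assms(3,4) unfolding int_ideal_def by blast
  have S: "dsubmod D (gen D S)" "gen D S \<subseteq> D" using gen_dsubmod gen_subset_D assms(2) by auto
  have "st (sum_set (gen D S) B) = st (gen D (S \<union> T))"
    using star_sum_set_star[OF S T(2)] T(3) by (simp add: gen_Un)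
  moreover have "int_ideal (gen D (S \<union> T))" using int_ideal_sum_set[OF S T(2)] by (simp add: gen_Un)
  ultimately show ?thesis
    unfolding finite_type_def fin_gen_def using int_ideal_nz_frac_ideal assms(1) T(1) by blast
qed

lemma finite_type_star_sum_set:
  assumes "finite_type D st A" "int_ideal A" "finite_type D st B" "int_ideal B"
  shows "finite_type D st (st (sum_set A B))"
proof -
  obtain S where S: "finite S" "int_ideal (gen D S)" "A = st (gen D S)"
    using finite_type_int_ideal_obtain assms(1,2) unfolding int_ideal_def by blast
  have "st (sum_set A B) = st (sum_set (gen D S) B)"
    using star_sum_set_star[of B "gen D S"] S(2,3) assms(4)
    by (simp add: sum_set_commute int_ideal_def)
  moreover have "S \<subseteq> D" using gen_superset S(2) unfolding int_ideal_def by blast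
  ultimately show ?thesis using finite_type_star_gen_sum S(1) assms(3,4) by simp
qed

text \<open>Finite character is what makes a directed union of \<open>\<ast>\<close>-ideals a \<open>\<ast>\<close>-ideal: an element of
  \<open>(\<Union>\<A>)\<^sup>\<ast>\<close> already lies in \<open>J\<^sup>\<ast>\<close> for a finitely generated \<open>J \<subseteq> \<Union>\<A>\<close>, which sits inside a single member.\<close>

lemma star_Union_directed:
  assumes fc: "finite_character D st"
    and ideals: "\<forall>A\<in>\<A>. int_ideal A \<and> st A = A" and "\<A> \<noteq> {}" "directed \<A>"
  shows "int_ideal (\<Union>\<A>)" "st (\<Union>\<A>) = \<Union>\<A>"
proof -
  obtain A0 where A0: "A0 \<in> \<A>" using assms(3) by blast
  have "A0 \<noteq> {0}" "0 \<in> A0" using ideals A0 unfolding int_ideal_def dsubmod_def by auto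
  then obtain a where "a \<in> A0" "a \<noteq> 0" by blast
  then have "\<Union>\<A> \<noteq> {0}" using A0 by blast
  moreover have "\<Union>\<A> \<subseteq> D" using ideals unfolding int_ideal_def by blast
  moreover have "dsubmod D (\<Union>\<A>)"
    using dsubmod_Union_directed assms(3,4) ideals unfolding int_ideal_def by blast
  ultimately show U: "int_ideal (\<Union>\<A>)" unfolding int_ideal_def by blast
  show "st (\<Union>\<A>) = \<Union>\<A>"
  proof
    show "\<Union>\<A> \<subseteq> st (\<Union>\<A>)" using star_extensive int_ideal_nz_frac_ideal U by blast
    show "st (\<Union>\<A>) \<subseteq> \<Union>\<A>"
    proof
      fix z assume "z \<in> st (\<Union>\<A>)"
      moreover have "st (\<Union>\<A>) = \<Union>{st J |J. nz_frac_ideal D J \<and> fin_gen D J \<and> J \<subseteq> \<Union>\<A>}"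
        using fc int_ideal_nz_frac_ideal[OF U] unfolding finite_character_def by simp
      ultimately obtain J where J: "nz_frac_ideal D J" "fin_gen D J" "J \<subseteq> \<Union>\<A>" "z \<in> st J"
        by auto
      then obtain T where T: "finite T" "J = gen D T" unfolding fin_gen_def by blast
      have "T \<subseteq> \<Union>\<A>" using gen_superset J(3) T(2) by blast
      then obtain A where A: "A \<in> \<A>" "T \<subseteq> A"
        using finite_subset_Union_directed T(1) assms(3,4) by blast
      have A_ideal: "int_ideal A" "st A = A" using ideals A(1) by auto
      have "J \<subseteq> A" using gen_least T(2) A(2) A_ideal(1) unfolding int_ideal_def by blast
      then have "st J \<subseteq> st A" using star_mono J(1) int_ideal_nz_frac_ideal A_ideal(1) by blast
      then have "st J \<subseteq> A" using A_ideal(2) by simp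
      then show "z \<in> \<Union>\<A>" using J(4) A(1) by blast
    qed
  qed
qed

end

locale star_homog_ideal = star_domain +
  fixes I
  assumes finite_char: "finite_character D st" and homog: "star_homog D st I"
begin

definition ft_over_I where
  "ft_over_I = {A. proper_int_star D st A \<and> finite_type D st A \<and> I \<subseteq> A}"

lemma ft_over_I_iff:
  "A \<in> ft_over_I \<longleftrightarrow> int_ideal A \<and> st A = A \<and> A \<noteq> D \<and> finite_type D st A \<and> I \<subseteq> A"
  unfolding ft_over_I_def by (simp add: proper_int_star_iff)

lemma I_in_ft_over_I: "I \<in> ft_over_I"
proof -
  have "proper_int_star D st I" "finite_type D st I"
    using homog unfolding star_homog_def by simp_all
  then show ?thesis unfolding ft_over_I_def by simp
qed

lemma int_ideal_I: "int_ideal I"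
  using I_in_ft_over_I ft_over_I_iff by simp

lemma ft_over_I_star_sum_set:
  assumes "A \<in> ft_over_I" "B \<in> ft_over_I"
  shows "st (sum_set A B) \<in> ft_over_I" "A \<union> B \<subseteq> st (sum_set A B)"
proof -
  have A: "int_ideal A" "finite_type D st A" "I \<subseteq> A" "proper_int_star D st A"
    using assms(1) ft_over_I_iff ft_over_I_def by auto
  have B: "int_ideal B" "finite_type D st B" "I \<subseteq> B" "proper_int_star D st B"
    using assms(2) ft_over_I_iff ft_over_I_def by auto
  have AB: "int_ideal (sum_set A B)"
    using int_ideal_sum_set A(1) B(1) unfolding int_ideal_def by blast
  have ext: "sum_set A B \<subseteq> st (sum_set A B)"
    using star_extensive int_ideal_nz_frac_ideal AB by blast
  have "A \<subseteq> sum_set A B" "B \<subseteq> sum_set A B"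
    using sum_set_upper1 sum_set_upper2 A(1) B(1) unfolding int_ideal_def by blast+
  then show "A \<union> B \<subseteq> st (sum_set A B)" using ext by blast
  have "st (sum_set A B) \<noteq> D"
    using homog A(2-4) B(2-4) unfolding star_homog_def by blast
  moreover have "I \<subseteq> st (sum_set A B)" using A(3) \<open>A \<subseteq> sum_set A B\<close> ext by blast
  moreover have "int_ideal (st (sum_set A B))" using star_int_ideal AB .
  moreover have "st (st (sum_set A B)) = st (sum_set A B)"
    using star_idem int_ideal_nz_frac_ideal AB by blast
  moreover have "finite_type D st (st (sum_set A B))"
    using finite_type_star_sum_set A(1,2) B(1,2) by blast
  ultimately show "st (sum_set A B) \<in> ft_over_I" unfolding ft_over_I_iff by blast
qed

lemma directed_ft_over_I: "directed ft_over_I"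
  unfolding directed_def
proof (intro ballI)
  fix A B assume "A \<in> ft_over_I" "B \<in> ft_over_I"
  from ft_over_I_star_sum_set[OF this] show "\<exists>C\<in>ft_over_I. A \<union> B \<subseteq> C" by (rule rev_bexI)
qed

lemma star_principal_sum_in_ft_over_I:
  assumes "x \<in> M_of D st I"
  shows "st (sum_set (smul_set x D) I) \<in> ft_over_I" "x \<in> st (sum_set (smul_set x D) I)"
proof -
  have x: "x \<in> D" "st (sum_set (smul_set x D) I) \<noteq> D" using assms unfolding M_of_def by auto
  have gx: "gen D {x} = smul_set x D" using gen_singleton x(1) .
  let ?A = "sum_set (gen D {x}) I"
  have dx: "dsubmod D (gen D {x})" "gen D {x} \<subseteq> D" using gen_dsubmod gen_subset_D x(1) by auto
  have A: "int_ideal ?A" using int_ideal_sum_set dx int_ideal_I by blast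
  have ext: "?A \<subseteq> st ?A" using star_extensive int_ideal_nz_frac_ideal A by blast
  have I_sub: "I \<subseteq> ?A" using sum_set_upper2 dx(1) .
  have "x \<in> ?A"
    using sum_set_upper1[where A="gen D {x}" and B=I] gen_superset[where T="{x}"] int_ideal_I
    unfolding int_ideal_def by blast
  then have "x \<in> st ?A" using ext by blast
  then show "x \<in> st (sum_set (smul_set x D) I)" using gx by simp
  have "finite_type D st (st ?A)"
    using finite_type_star_gen_sum[of "{x}" I] x(1) I_in_ft_over_I int_ideal_I ft_over_I_iff by blast
  moreover have "int_ideal (st ?A)" using star_int_ideal A .
  moreover have "st (st ?A) = st ?A" using star_idem int_ideal_nz_frac_ideal A by blast
  moreover have "I \<subseteq> st ?A" using I_sub ext by blast
  ultimately show "st (sum_set (smul_set x D) I) \<in> ft_over_I"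
    unfolding ft_over_I_iff using x(2) gx by simp
qed

lemma proper_int_star_subset_M_of:
  assumes "proper_int_star D st A" "I \<subseteq> A"
  shows "A \<subseteq> M_of D st I"
proof
  fix y assume y: "y \<in> A"
  have A: "int_ideal A" "st A = A" "A \<noteq> D" using assms(1) proper_int_star_iff by auto
  have yD: "y \<in> D" and dA: "dsubmod D A" using y A(1) unfolding int_ideal_def by auto
  have dy: "dsubmod D (gen D {y})" "gen D {y} \<subseteq> D" using gen_dsubmod gen_subset_D yD by auto
  have "gen D {y} \<subseteq> A" using gen_least[OF dA] y by blast
  then have sub: "sum_set (gen D {y}) I \<subseteq> A" using sum_set_least[OF dA] assms(2) by blast
  have "int_ideal (sum_set (gen D {y}) I)" using int_ideal_sum_set dy int_ideal_I by blast
  then have "st (sum_set (gen D {y}) I) \<subseteq> A"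
    using star_mono[OF _ int_ideal_nz_frac_ideal[OF A(1)] sub] int_ideal_nz_frac_ideal A(2) by simp
  then have "st (sum_set (gen D {y}) I) \<noteq> D" using A(1,3) unfolding int_ideal_def by blast
  then show "y \<in> M_of D st I" using yD gen_singleton[OF yD] unfolding M_of_def by simp
qed

lemma M_of_eq_Union: "M_of D st I = \<Union>ft_over_I"
proof
  show "M_of D st I \<subseteq> \<Union>ft_over_I" using star_principal_sum_in_ft_over_I by blast
  show "\<Union>ft_over_I \<subseteq> M_of D st I"
    using proper_int_star_subset_M_of unfolding ft_over_I_def by blast
qed

lemma proper_int_star_M_of: "proper_int_star D st (M_of D st I)"
proof -
  have members: "\<forall>A\<in>ft_over_I. int_ideal A \<and> st A = A" using ft_over_I_iff by blast
  have ne: "ft_over_I \<noteq> {}" using I_in_ft_over_I by blast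
  have "sum_set D I = D"
    using sum_set_upper1[where A=D and B=I] sum_set_subset_D[of D I] int_ideal_I
    unfolding int_ideal_def by blast
  then have "1 \<notin> M_of D st I" unfolding M_of_def by (simp add: smul_one_D star_D)
  then have "M_of D st I \<noteq> D" using one_in_D by blast
  then show ?thesis
    unfolding M_of_eq_Union proper_int_star_iff
    using star_Union_directed[OF finite_char members ne directed_ft_over_I] by blast
qed

end

theorem propositionA:
  fixes D :: "'k::field set" and st :: "'k set \<Rightarrow> 'k set" and I :: "'k set"
  assumes "subring_with_qf D"
    and "star_op D st"
    and "finite_character D st"
    and "star_homog D st I"
  shows "max_star_ideal D st (M_of D st I) \<and> I \<subseteq> M_of D st I \<and>
         (\<forall>P. max_star_ideal D st P \<and> I \<subseteq> P \<longrightarrow> P = M_of D st I)"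
proof -
  interpret star_homog_ideal D st I using assms by unfold_locales
  have I_sub: "I \<subseteq> M_of D st I" using M_of_eq_Union I_in_ft_over_I by blast
  have "max_star_ideal D st (M_of D st I)"
    unfolding max_star_ideal_def
    using proper_int_star_M_of proper_int_star_subset_M_of I_sub by blast
  moreover have "P = M_of D st I" if "max_star_ideal D st P" "I \<subseteq> P" for P
    using that proper_int_star_subset_M_of proper_int_star_M_of unfolding max_star_ideal_def by blast
  ultimately show ?thesis using I_sub by blast
qed

end
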